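(* Let $k$ be a nonnegative integer. Then there exist rational numbers $\xi_0,\dots,\xi_{k-1}$ (depending only on $k$) such that for every strict partition $\lambda$, with inner corner contents $x_0,\dots,x_m$, and every $i\in\{0,\dots,m\}$ for which $\lambda^{i+}$ is defined, $$q_k(\lambda^{i+})-q_k(\lambda)=\sum_{j=0}^{k-1}\xi_j\binom{x_i}{2}^j.$$
   Context: A strict partition is a finite strictly decreasing sequence of positive integers $\lambda=(\lambda_1>\cdots>\lambda_\ell)$ (the empty sequence is allowed); $\ell(\lambda)=\ell$, and $\lambda_i=0$ for $i>\ell(\lambda)$. The (shifted Young) diagram of $\lambda$ is the set of boxes $(i,j)$ with $1\le i\le\ell(\lambda)$, $i+1\le j\le i+\lambda_i$ (row $i$, column $j$); $\lambda$ is identified with its diagram; the content of $\square=(i,j)$ is $c_\square=j-i$. An outer corner of $\lambda$ is a box of $\lambda$ whose removal leaves the diagram of a strict partition. Let $(\alpha_1,\beta_1),\dots,(\alpha_m,\beta_m)$ be the outer corners with $\alpha_1>\cdots>\alpha_m$, and $y_j=\beta_j-\alpha_j$. Set $\alpha_{m+1}=0$, $\beta_0=\ell(\lambda)+1$, and $x_i=\beta_i-\alpha_{i+1}$ for $0\le i\le m$ (inner corner contents); one has $x_0=1\le y_1<x_1<\cdots<y_m<x_m$. For $k\ge0$, $q_k(\lambda)=\sum_{i=0}^m\binom{x_i}{2}^k-\sum_{i=1}^m\binom{y_i}{2}^k$. For $1\le i\le m$, $\lambda^{i+}$ is the strict partition obtained from $\lambda$ by adding a box of content $x_i$; if $m=0$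 or $y_1>1$, $\lambda^{0+}$ is the strict partition obtained by adding a box of content $x_0=1$ (a new row of length 1), and $\lambda^{0+}$ is undefined otherwise. *)

theory Defs
  imports Complex_Main "HOL-Library.Product_Lexorder"
begin

definition strict_partition :: "nat list \<Rightarrow> bool" where
  "strict_partition la \<longleftrightarrow> sorted_wrt (>) la \<and> (\<forall>x\<in>set la. 0 < x)"

definition diagram :: "nat list \<Rightarrow> (nat \<times> nat) set" where
  "diagram la = {(i, j). 1 \<le> i \<and> i \<le> length la \<and> i + 1 \<le> j \<and> j \<le> i + la ! (i - 1)}"

definition content :: "nat \<times> nat \<Rightarrow> int" where
  "content b = int (snd b) - int (fst b)"

definition outer_corners :: "nat list \<Rightarrow> (nat \<times> nat) set" where
  "outer_corners la = {b \<in> diagram la. \<exists>mu. strict_partition mu \<and> diagram mu = diagram la - {b}}"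

definition num_corners :: "nat list \<Rightarrow> nat" where
  "num_corners la = card (outer_corners la)"

text \<open>The outer corners listed with strictly decreasing row index alpha_1 > ... > alpha_m
  (rows of distinct corners are distinct, so lexicographic order on pairs is row order).\<close>

definition corner :: "nat list \<Rightarrow> nat \<Rightarrow> nat \<times> nat" where
  "corner la j = rev (sorted_list_of_set (outer_corners la)) ! (j - 1)"

definition alpha :: "nat list \<Rightarrow> nat \<Rightarrow> nat" where
  "alpha la j = (if 1 \<le> j \<and> j \<le> num_corners la then fst (corner la j) else 0)"

definition beta :: "nat list \<Rightarrow> nat \<Rightarrow> nat" where
  "beta la j = (if j = 0 then length la + 1 else snd (corner la j))"

text \<open>Inner corner contents x_i = beta_i - alpha_(i+1) (0 <= i <= m), outer corner contents
  y_j = beta_j - alpha_j (1 <= j <= m).\<close>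
definition xcont :: "nat list \<Rightarrow> nat \<Rightarrow> int" where
  "xcont la i = int (beta la i) - int (alpha la (i + 1))"

definition ycont :: "nat list \<Rightarrow> nat \<Rightarrow> int" where
  "ycont la j = int (beta la j) - int (alpha la j)"

definition binom2 :: "int \<Rightarrow> int" where
  "binom2 x = x * (x - 1) div 2"

definition qk :: "nat \<Rightarrow> nat list \<Rightarrow> rat" where
  "qk k la = (\<Sum>i = 0..num_corners la. of_int (binom2 (xcont la i)) ^ k)
            - (\<Sum>i = 1..num_corners la. of_int (binom2 (ycont la i)) ^ k)"

definition plus_partition :: "nat list \<Rightarrow> nat \<Rightarrow> nat list \<Rightarrow> bool" where
  "plus_partition la i mu \<longleftrightarrow>
     i \<le> num_corners la \<and> (i = 0 \<longrightarrow> num_corners la = 0 \<or> ycont la 1 > 1) \<and>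
     strict_partition mu \<and>
     (\<exists>b. b \<notin> diagram la \<and> content b = xcont la i \<and> diagram mu = insert b (diagram la))"

end

theory Submission
  imports Defs "HOL-Computational_Algebra.Polynomial" "HOL-Library.More_List"
begin

(* Write F(x) = binom(x,2)^k. Between two consecutive outer corners the parts of a strict
   partition drop by exactly one per row, so each difference F(x_j) - F(y_j) in q_k telescopes
   along the rows of its block; hence q_k(lambda) = F(1) + (sum over parts s of F(s+1) - F(s)).
   Adding a box of content c raises one part from c - 1 to c (or appends a part 1 when c = 1,
   harmless as F(1) = F(0)), so q_k changes by the second difference F(c+1) - 2 F(c) + F(c-1).
   With t = binom(c,2) and a = c - 1/2 one has binom(c +- 1, 2) = t + 1/2 +- a and
   a^2 = 2t + 1/4, so the odd powers of a cancel and the second difference is a polynomial in t;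
   its degree is below k because the two leading terms 2t^k cancel. *)

lemma sorted_list_of_set_image:
  fixes f :: "'a::linorder \<Rightarrow> 'b::linorder"
  assumes "strict_mono_on A f" "finite A"
  shows "sorted_list_of_set (f ` A) = map f (sorted_list_of_set A)"
proof -
  have "sorted_wrt (<) (map f (sorted_list_of_set A))"
    unfolding sorted_wrt_map
    by (rule sorted_wrt_mono_rel[OF _ strict_sorted_list_of_set])
      (use assms in \<open>auto dest: strict_mono_onD\<close>)
  moreover have "card (f ` A) = card A"
    using assms by (simp add: card_image strict_mono_on_imp_inj_on)
  ultimately show ?thesis
    using assms by (subst sorted_list_of_set_unique[symmetric]) auto
qed

lemma sorted_wrt_less_nth_gap:
  fixes xs :: "'a::linorder list"
  assumes "sorted_wrt (<) xs" "Suc i < length xs" "xs ! i < x" "x < xs ! Suc i"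
  shows "x \<notin> set xs"
proof
  assume "x \<in> set xs"
  then obtain t where t: "t < length xs" "x = xs ! t" by (auto simp: in_set_conv_nth)
  have mono: "xs ! a \<le> xs ! b" if "a \<le> b" "b < length xs" for a b
    using that assms(1) sorted_wrt_nth_less[of "(<)" xs a b] by (cases "a = b") auto
  show False
  proof (cases "t \<le> i")
    case True
    then show False using mono[of t i] assms(2,3) t by simp
  next
    case False
    then show False using mono[of "Suc i" t] assms(4) t by simp
  qed
qed


section \<open>Diagrams as part functions\<close>

(* part la n is the paper's lambda_(n+1), extended by 0 beyond the length; row i of the diagram
   is governed by part la (i - 1). *)

abbreviation part :: "nat list \<Rightarrow> nat \<Rightarrow> nat" where
  "part la \<equiv> nth_default 0 la"

lemma mem_diagram_iff:
  "(i, j) \<in> diagram la \<longleftrightarrow> 1 \<le> i \<and> i < j \<and> j \<le> i + part la (i - 1)"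
  by (auto simp: diagram_def nth_default_def)

lemma diagram_row: "{j. (Suc n, j) \<in> diagram la} = {Suc n<..Suc n + part la n}"
  by (auto simp: mem_diagram_iff)

lemma diagram_add_box_iff:
  "b \<notin> diagram la \<and> diagram mu = insert b (diagram la) \<longleftrightarrow>
   (\<exists>p. b = (Suc p, Suc p + Suc (part la p)) \<and> part mu = (part la)(p := Suc (part la p)))"
proof
  assume b: "b \<notin> diagram la \<and> diagram mu = insert b (diagram la)"
  obtain i q where biq: "b = (i, q)" by (cases b)
  then have "(i, q) \<in> diagram mu" using b by auto
  then obtain p where p: "i = Suc p" by (auto simp: mem_diagram_iff dest: Suc_le_D)
  have rows: "{j. (Suc n, j) \<in> diagram mu} =
      (if n = p then insert q {j. (Suc n, j) \<in> diagram la}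
       else {j. (Suc n, j) \<in> diagram la})" for n
    using b biq p by auto
  have "part mu n = part la n" if "n \<noteq> p" for n
    using arg_cong[OF rows[of n], of card] that by (simp add: diagram_row)
  moreover have q: "q \<in> {Suc p<..Suc p + part mu p} - {Suc p<..Suc p + part la p}"
    using b biq p diagram_row[of p mu] diagram_row[of p la] by blast
  moreover have "part mu p = Suc (part la p)"
    using arg_cong[OF rows[of p], of card] q by (simp add: diagram_row)
  ultimately show "\<exists>p. b = (Suc p, Suc p + Suc (part la p)) \<and>
      part mu = (part la)(p := Suc (part la p))"
    using biq p by (intro exI[of _ p]) auto
next
  assume "\<exists>p. b = (Suc p, Suc p + Suc (part la p)) \<and> part mu = (part la)(p := Suc (part la p))"
  then obtain p where
    "b = (Suc p, Suc p + Suc (part la p))" "part mu = (part la)(p := Suc (part la p))"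
    by blast
  then show "b \<notin> diagram la \<and> diagram mu = insert b (diagram la)"
    by (auto simp: set_eq_iff mem_diagram_iff)
qed

lemma sum_list_map_eq_sum_part:
  assumes "g 0 = 0" "length la \<le> N"
  shows "sum_list (map g la) = (\<Sum>n<N. g (part la n))"
proof -
  have "sum_list (map g la) = (\<Sum>n<length la. g (part la n))"
    by (simp add: sum_list_sum_nth atLeast0LessThan nth_default_nth)
  also have "\<dots> = (\<Sum>n<N. g (part la n))"
    using assms by (intro sum.mono_neutral_left) (auto simp: nth_default_beyond)
  finally show ?thesis .
qed

lemma sum_list_map_add_box:
  fixes g :: "nat \<Rightarrow> 'a::ab_group_add"
  assumes "b \<notin> diagram la" "diagram mu = insert b (diagram la)" "g 0 = 0"
  obtains c where "Defs.content b = int (Suc c)"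
    "sum_list (map g mu) = sum_list (map g la) + (g (Suc c) - g c)"
proof -
  obtain p where b: "b = (Suc p, Suc p + Suc (part la p))"
    and mu: "part mu = (part la)(p := Suc (part la p))"
    using assms(1,2) diagram_add_box_iff by blast
  define N where "N = length la + length mu + Suc p"
  have "sum_list (map g mu) = (\<Sum>n<N. g (part mu n))"
    using assms(3) by (intro sum_list_map_eq_sum_part) (auto simp: N_def)
  also have "\<dots> = (\<Sum>n<N. g (part la n) +
      (if n = p then g (Suc (part la p)) - g (part la p) else 0))"
    by (intro sum.cong) (auto simp: mu)
  also have "\<dots> = sum_list (map g la) + (g (Suc (part la p)) - g (part la p))"
    using assms(3) sum_list_map_eq_sum_part[of g la N] by (simp add: sum.distrib N_def)
  finally show ?thesis
    using that[of "part la p"] b by (simp add: Defs.content_def)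
qed


section \<open>Outer corners of strict partitions\<close>

lemma strict_partition_iff_part:
  "strict_partition la \<longleftrightarrow>
     (\<forall>n<length la. 0 < la ! n) \<and>
     (\<forall>n. 0 < part la (Suc n) \<longrightarrow> part la (Suc n) < part la n)"
proof -
  have "transp ((>) :: nat \<Rightarrow> nat \<Rightarrow> bool)" by (auto intro: transpI)
  then have "sorted_wrt (>) la \<longleftrightarrow> (\<forall>n. Suc n < length la \<longrightarrow> la ! Suc n < la ! n)"
    by (simp add: sorted_wrt_iff_nth_Suc_transp)
  then show ?thesis
    unfolding strict_partition_def all_set_conv_all_nth
    by (auto simp: nth_default_def split: if_splits)
qed

definition corner_rows :: "nat list \<Rightarrow> nat set" where
  "corner_rows la = {Suc p | p. p < length la \<and> (Suc p = length la \<or> la ! Suc p + 1 < la ! p)}"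

lemma Suc_mem_corner_rows_iff:
  "Suc p \<in> corner_rows la \<longleftrightarrow> p < length la \<and> (Suc p = length la \<or> la ! Suc p + 1 < la ! p)"
  by (auto simp: corner_rows_def)

lemma corner_rows_subset: "corner_rows la \<subseteq> {1..length la}"
  by (auto simp: corner_rows_def)

lemma finite_corner_rows: "finite (corner_rows la)"
  using corner_rows_subset finite_subset by blast

lemma mem_outer_corners_iff:
  "b \<in> outer_corners la \<longleftrightarrow>
   (\<exists>mu p. strict_partition mu \<and> b = (Suc p, Suc p + Suc (part mu p)) \<and>
      part la = (part mu)(p := Suc (part mu p)))"
proof -
  have "b \<in> diagram la \<and> diagram mu = diagram la - {b} \<longleftrightarrow>
      b \<notin> diagram mu \<and> diagram la = insert b (diagram mu)" for mu
    by blast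
  then have "b \<in> outer_corners la \<longleftrightarrow>
      (\<exists>mu. strict_partition mu \<and> b \<notin> diagram mu \<and> diagram la = insert b (diagram mu))"
    unfolding outer_corners_def by auto
  then show ?thesis
    by (simp add: diagram_add_box_iff)
qed

lemma strict_partition_remove_corner:
  assumes la: "strict_partition la" and p: "Suc p \<in> corner_rows la"
  shows "\<exists>mu. strict_partition mu \<and> part mu = (part la)(p := la ! p - 1)"
proof -
  have pl: "p < length la" and corner: "Suc p = length la \<or> la ! Suc p + 1 < la ! p"
    using p by (auto simp: corner_rows_def)
  have pos: "\<forall>n<length la. 0 < la ! n"
    and dec: "\<And>n. 0 < part la (Suc n) \<Longrightarrow> part la (Suc n) < part la n"
    using la by (auto simp: strict_partition_iff_part)
  define h where "h = (part la)(p := la ! p - 1)"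
  have h_dec: "h (Suc n) < h n" if "0 < h (Suc n)" for n
    using that dec[of n] dec[of p] corner pl by (auto simp: h_def nth_default_def split: if_splits)
  show ?thesis
  proof (cases "la ! p = 1")
    case True
    then have "Suc p = length la" using corner pl by auto
    then have "part (butlast la) n = h n" for n
      using True by (cases "n = p") (auto simp: h_def nth_default_def nth_butlast)
    then have "part (butlast la) = h" ..
    moreover have "\<forall>n<length (butlast la). 0 < butlast la ! n"
      using pos by (simp add: nth_butlast)
    ultimately show ?thesis
      using h_dec unfolding h_def[symmetric] strict_partition_iff_part by metis
  next
    case False
    have "part (la[p := la ! p - 1]) = h"
      using pl by (simp add: fun_eq_iff h_def nth_default_def)
    moreover have "\<forall>n<length (la[p := la ! p - 1]). 0 < la[p := la ! p - 1] ! n"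
      using pos False pl by (auto simp: nth_list_update)
    ultimately show ?thesis
      using h_dec unfolding h_def[symmetric] strict_partition_iff_part by metis
  qed
qed

lemma outer_corners_eq:
  assumes la: "strict_partition la"
  shows "outer_corners la = (\<lambda>a. (a, a + la ! (a - 1))) ` corner_rows la"
proof (intro set_eqI iffI)
  fix b assume "b \<in> outer_corners la"
  then obtain mu p where mu: "strict_partition mu" and b: "b = (Suc p, Suc p + Suc (part mu p))"
    and la_mu: "part la = (part mu)(p := Suc (part mu p))"
    by (auto simp: mem_outer_corners_iff)
  have la_p: "part la p = Suc (part mu p)" using la_mu by simp
  then have pl: "p < length la" by (auto simp: nth_default_def split: if_splits)
  have "la ! Suc p + 1 < la ! p" if "Suc p < length la"
  proof -
    have "part mu (Suc p) = la ! Suc p"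
      using fun_cong[OF la_mu, of "Suc p"] that by (simp add: nth_default_nth)
    moreover have "0 < la ! Suc p"
      using la that by (simp add: strict_partition_iff_part)
    ultimately have "la ! Suc p < part mu p"
      using mu by (metis strict_partition_iff_part)
    then show ?thesis using la_p pl by (simp add: nth_default_nth)
  qed
  then have "Suc p \<in> corner_rows la" using pl by (force simp: corner_rows_def)
  moreover have "b = (Suc p, Suc p + la ! p)" using b la_p pl by (simp add: nth_default_nth)
  ultimately show "b \<in> (\<lambda>a. (a, a + la ! (a - 1))) ` corner_rows la" by force
next
  fix b assume "b \<in> (\<lambda>a. (a, a + la ! (a - 1))) ` corner_rows la"
  then obtain a where a: "a \<in> corner_rows la" and b: "b = (a, a + la ! (a - 1))"
    by blast
  then obtain p where "a = Suc p" by (auto simp: corner_rows_def)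
  with a b have p: "Suc p \<in> corner_rows la" and b: "b = (Suc p, Suc p + la ! p)"
    by simp_all
  obtain mu where mu: "strict_partition mu" "part mu = (part la)(p := la ! p - 1)"
    using strict_partition_remove_corner[OF la p] by blast
  have pl: "p < length la" using p by (auto simp: corner_rows_def)
  then have "0 < la ! p" using la by (simp add: strict_partition_iff_part)
  then have "part la = (part mu)(p := Suc (part mu p))" "la ! p = Suc (part mu p)"
    using mu(2) pl by (auto simp: fun_eq_iff nth_default_nth)
  then show "b \<in> outer_corners la"
    using mu(1) b by (auto simp: mem_outer_corners_iff)
qed

lemma num_corners_eq_card:
  assumes "strict_partition la"
  shows "num_corners la = card (corner_rows la)"
  unfolding num_corners_def outer_corners_eq[OF assms]
  by (rule card_image) (auto simp: inj_on_def)

lemma alpha_beta_eq: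
  assumes la: "strict_partition la" and j: "1 \<le> j" "j \<le> num_corners la"
  shows "alpha la j = sorted_list_of_set (corner_rows la) ! (num_corners la - j)"
    and "beta la j = alpha la j + la ! (alpha la j - 1)"
proof -
  define rs where "rs = sorted_list_of_set (corner_rows la)"
  have "strict_mono_on (corner_rows la) (\<lambda>a. (a, a + la ! (a - 1)))"
    by (auto simp: strict_mono_on_def)
  then have "sorted_list_of_set (outer_corners la) = map (\<lambda>a. (a, a + la ! (a - 1))) rs"
    by (simp add: outer_corners_eq[OF la] sorted_list_of_set_image rs_def finite_corner_rows)
  moreover have "length rs = num_corners la"
    by (simp add: rs_def num_corners_eq_card[OF la] finite_corner_rows)
  ultimately have "corner la j = (\<lambda>a. (a, a + la ! (a - 1))) (rs ! (num_corners la - j))"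
    using j by (simp add: corner_def rev_nth)
  then show "alpha la j = rs ! (num_corners la - j)"
    and "beta la j = alpha la j + la ! (alpha la j - 1)"
    using j by (simp_all add: alpha_def beta_def)
qed

lemma alpha_consecutive:
  assumes la: "strict_partition la" and j: "1 \<le> j" "j \<le> num_corners la"
  shows "alpha la (Suc j) < alpha la j" "alpha la j \<le> length la"
    and "\<And>r. alpha la (Suc j) < r \<Longrightarrow> r < alpha la j \<Longrightarrow> r \<notin> corner_rows la"
proof -
  define m where "m = num_corners la"
  define xs where "xs = 0 # sorted_list_of_set (corner_rows la)"
  have set_xs: "set xs = insert 0 (corner_rows la)"
    by (simp add: xs_def finite_corner_rows)
  have len: "length xs = Suc m"
    by (simp add: xs_def m_def num_corners_eq_card[OF la] finite_corner_rows)
  have sorted: "sorted_wrt (<) xs"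
    using corner_rows_subset by (fastforce simp: xs_def finite_corner_rows)
  have nth: "alpha la i = xs ! (Suc m - i)" if "1 \<le> i" "i \<le> Suc m" for i
  proof (cases "i = Suc m")
    case True
    then show ?thesis by (simp add: alpha_def m_def xs_def)
  next
    case False
    then have "Suc m - i = Suc (m - i)" using that by simp
    then show ?thesis
      using False that alpha_beta_eq(1)[OF la] by (simp add: xs_def m_def)
  qed
  have a_Suc: "alpha la (Suc j) = xs ! (m - j)" and a_j: "alpha la j = xs ! Suc (m - j)"
    using nth[of "Suc j"] nth[of j] j by (simp_all add: m_def Suc_diff_le)
  have idx: "Suc (m - j) < length xs" using len j by (simp add: m_def)
  show "alpha la (Suc j) < alpha la j"
    unfolding a_Suc a_j using sorted idx by (simp add: sorted_wrt_nth_less)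
  have "alpha la j \<in> corner_rows la"
    using alpha_beta_eq(1)[OF la j] j nth_mem[of "m - j" "sorted_list_of_set (corner_rows la)"]
    by (simp add: m_def finite_corner_rows num_corners_eq_card[OF la])
  then show "alpha la j \<le> length la" using corner_rows_subset[of la] by auto
  show "r \<notin> corner_rows la" if "alpha la (Suc j) < r" "r < alpha la j" for r
    using sorted_wrt_less_nth_gap[OF sorted, of "m - j" r] that idx set_xs
    unfolding a_Suc a_j by auto
qed

lemma alpha_one:
  assumes la: "strict_partition la"
  shows "alpha la 1 = length la"
proof (cases "la = []")
  case True
  then have "num_corners la = 0"
    using num_corners_eq_card[OF la] by (simp add: corner_rows_def)
  then show ?thesis using True by (simp add: alpha_def)
next
  case False
  define rs where "rs = sorted_list_of_set (corner_rows la)"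
  have "length la \<in> corner_rows la"
    using False Suc_mem_corner_rows_iff[of "length la - 1" la] by simp
  then have l_mem: "length la \<in> set rs"
    by (simp add: rs_def finite_corner_rows)
  have len: "length rs = num_corners la"
    by (simp add: rs_def num_corners_eq_card[OF la])
  then have m: "1 \<le> num_corners la"
    using l_mem by (cases rs) auto
  obtain t where t: "t < length rs" "rs ! t = length la"
    using l_mem by (auto simp: in_set_conv_nth)
  have "alpha la 1 = rs ! (num_corners la - 1)"
    using alpha_beta_eq(1)[OF la _ m] by (simp add: rs_def)
  then have "length la \<le> alpha la 1"
    using t len sorted_nth_mono[of rs t "num_corners la - 1"] by (simp add: rs_def)
  moreover have "alpha la 1 \<le> length la"
    using alpha_consecutive(2)[OF la _ m] by simp
  ultimately show ?thesis by simp
qed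


section \<open>Telescoping the corner sum\<close>

lemma parts_below_corner_row:
  assumes la: "strict_partition la" and "\<rho> \<le> length la"
    and gap: "\<And>r. \<rho>' < r \<Longrightarrow> r < \<rho> \<Longrightarrow> r \<notin> corner_rows la"
    and "d < \<rho> - \<rho>'"
  shows "la ! (\<rho> - 1 - d) = la ! (\<rho> - 1) + d"
  using assms(4)
proof (induction d)
  case 0
  then show ?case by simp
next
  case (Suc d)
  define q where "q = \<rho> - 2 - d"
  have q: "Suc q = \<rho> - 1 - d" "q = \<rho> - 1 - Suc d" "\<rho>' < Suc q" "Suc q < length la"
    using Suc.prems assms(2) by (auto simp: q_def)
  have "Suc q \<notin> corner_rows la" using gap q by simp
  then have "\<not> la ! Suc q + 1 < la ! q" using q by (simp add: Suc_mem_corner_rows_iff)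
  moreover have "la ! Suc q < la ! q"
    using la q(4) sorted_wrt_nth_less[of "(>)" la q "Suc q"] by (simp add: strict_partition_def)
  ultimately show ?case using Suc q by simp
qed

lemma sum_below_corner_row:
  fixes \<phi> :: "nat \<Rightarrow> 'a::ab_group_add"
  assumes la: "strict_partition la" and "\<rho> \<le> length la" "\<rho>' \<le> \<rho>"
    and gap: "\<And>r. \<rho>' < r \<Longrightarrow> r < \<rho> \<Longrightarrow> r \<notin> corner_rows la"
  shows "(\<Sum>r\<in>{\<rho>'..<\<rho>}. \<phi> (Suc (la ! r)) - \<phi> (la ! r))
           = \<phi> (la ! (\<rho> - 1) + (\<rho> - \<rho>')) - \<phi> (la ! (\<rho> - 1))"
proof -
  define \<psi> where "\<psi> = (\<lambda>s. \<phi> (Suc s) - \<phi> s)"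
  define y where "y = la ! (\<rho> - 1)"
  (* y must stay opaque: as a rewrite rule, parts would also apply to la ! (\<rho> - 1) itself
     (the case d = 0, after simp normalises \<rho> - 1 to \<rho> - Suc 0) and loop. *)
  have parts: "la ! (\<rho> - 1 - d) = y + d" if "d < \<rho> - \<rho>'" for d
    unfolding y_def by (rule parts_below_corner_row[OF la assms(2) gap that])
  have "(\<Sum>r\<in>{\<rho>'..<\<rho>}. \<psi> (la ! r)) = (\<Sum>d<\<rho> - \<rho>'. \<psi> (la ! (\<rho> - 1 - d)))"
    by (rule sum.reindex_bij_witness[where i = "\<lambda>d. \<rho> - 1 - d" and j = "\<lambda>r. \<rho> - 1 - r"]) auto
  also have "\<dots> = (\<Sum>d<\<rho> - \<rho>'. \<psi> (y + d))"
    using parts by simp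
  also have "\<dots> = \<phi> (y + (\<rho> - \<rho>')) - \<phi> y"
    using sum_lessThan_telescope[of "\<lambda>d. \<phi> (y + d)"] by (simp add: \<psi>_def)
  finally show ?thesis by (simp add: \<psi>_def y_def)
qed

definition corner_sum :: "(int \<Rightarrow> 'a::ab_group_add) \<Rightarrow> nat list \<Rightarrow> 'a" where
  "corner_sum f la =
     (\<Sum>i = 0..num_corners la. f (xcont la i)) - (\<Sum>i = 1..num_corners la. f (ycont la i))"

lemma corner_sum_eq_sum_list:
  assumes la: "strict_partition la"
  shows "corner_sum f la = f 1 + sum_list (map (\<lambda>s. f (int s + 1) - f (int s)) la)"
proof -
  define m where "m = num_corners la"
  define G where "G = (\<lambda>n. \<Sum>r<n. f (int (la ! r) + 1) - f (int (la ! r)))"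
  have block: "f (xcont la j) - f (ycont la j) = G (alpha la j) - G (alpha la (Suc j))"
    if j: "1 \<le> j" "j \<le> m" for j
  proof -
    note cons = alpha_consecutive[OF la j[unfolded m_def]]
    define y where "y = la ! (alpha la j - 1)"
    have "G (alpha la j) - G (alpha la (Suc j)) =
        (\<Sum>r\<in>{alpha la (Suc j)..<alpha la j}. f (int (la ! r) + 1) - f (int (la ! r)))"
      using cons(1) by (simp add: G_def lessThan_atLeast0 sum_diff_nat_ivl)
    also have "\<dots> = f (int (y + (alpha la j - alpha la (Suc j)))) - f (int y)"
      using sum_below_corner_row[OF la cons(2) _ cons(3), where \<phi> = "f \<circ> int"] cons(1)
      by (simp add: y_def add_ac)
    also have "\<dots> = f (xcont la j) - f (ycont la j)"
      using alpha_beta_eq(2)[OF la j[unfolded m_def]] cons(1)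
      by (simp add: xcont_def ycont_def y_def of_nat_diff add.commute)
    finally show ?thesis ..
  qed
  have x0: "xcont la 0 = 1"
    using alpha_one[OF la] by (simp add: xcont_def beta_def)
  have "corner_sum f la = f (xcont la 0) + (\<Sum>j = 1..m. f (xcont la j) - f (ycont la j))"
    by (simp add: corner_sum_def m_def sum.atLeast_Suc_atMost sum_subtractf)
  also have "\<dots> = f 1 + (\<Sum>j = 1..m. G (alpha la j) - G (alpha la (Suc j)))"
    using x0 block by simp
  also have "\<dots> = f 1 + (G (alpha la 1) - G (alpha la (Suc m)))"
    using sum_Suc_diff[of 1 m "\<lambda>j. - G (alpha la j)"] by simp
  also have "\<dots> = f 1 + sum_list (map (\<lambda>s. f (int s + 1) - f (int s)) la)"
    using alpha_one[OF la] by (simp add: alpha_def m_def G_def sum_list_sum_nth atLeast0LessThan)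
  finally show ?thesis .
qed

lemma corner_sum_add_box:
  fixes f :: "int \<Rightarrow> 'a::ab_group_add"
  assumes la: "strict_partition la" and mu: "strict_partition mu"
    and b: "b \<notin> diagram la" "diagram mu = insert b (diagram la)" and f: "f 1 = f 0"
  shows "corner_sum f mu - corner_sum f la =
    (f (Defs.content b + 1) - f (Defs.content b)) - (f (Defs.content b) - f (Defs.content b - 1))"
proof -
  define g where "g = (\<lambda>s. f (int s + 1) - f (int s))"
  have "g 0 = 0" using f by (simp add: g_def)
  then obtain c where c: "Defs.content b = int (Suc c)"
    and sum: "sum_list (map g mu) = sum_list (map g la) + (g (Suc c) - g c)"
    using sum_list_map_add_box[OF b] by blast
  have "corner_sum f nu = f 1 + sum_list (map g nu)" if "strict_partition nu" for nu
    unfolding g_def by (rule corner_sum_eq_sum_list[OF that])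
  then have "corner_sum f mu - corner_sum f la = g (Suc c) - g c"
    using la mu sum by simp
  then show ?thesis
    using c by (simp add: g_def algebra_simps)
qed


section \<open>The second difference of a power of binom(x,2)\<close>

lemma of_int_binom2: "(of_int (binom2 c) :: 'a::field_char_0) = of_int c * (of_int c - 1) / 2"
proof -
  have "c * (c - 1) = 2 * binom2 c"
    unfolding binom2_def by simp
  then have "(of_int c * (of_int c - 1) :: 'a) = 2 * of_int (binom2 c)"
    by (metis of_int_1 of_int_diff of_int_mult of_int_numeral)
  then show ?thesis by simp
qed

lemma power_add_plus_power_diff:
  fixes a b :: "'a::comm_ring_1"
  shows "(b + a) ^ k + (b - a) ^ k =
    (\<Sum>e\<le>k. if even e then 2 * of_nat (k choose e) * (a\<^sup>2) ^ (e div 2) * b ^ (k - e) else 0)"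
proof -
  have "(b + a) ^ k + (b - a) ^ k =
      (\<Sum>e\<le>k. of_nat (k choose e) * (a ^ e + (- a) ^ e) * b ^ (k - e))"
    using binomial_ring[of a b k] binomial_ring[of "- a" b k]
    by (simp add: sum.distrib[symmetric] algebra_simps)
  also have "\<dots> =
      (\<Sum>e\<le>k. if even e then 2 * of_nat (k choose e) * (a\<^sup>2) ^ (e div 2) * b ^ (k - e) else 0)"
    by (intro sum.cong refl) (auto simp: power_mult[symmetric])
  finally show ?thesis .
qed

lemma poly_eq_sum_lessThan:
  fixes p :: "'a::comm_semiring_1 poly"
  assumes "\<And>j. n \<le> j \<Longrightarrow> coeff p j = 0"
  shows "poly p x = (\<Sum>j<n. coeff p j * x ^ j)"
proof -
  have "poly p x = (\<Sum>j\<le>degree p. coeff p j * x ^ j)"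
    by (rule poly_altdef)
  also have "\<dots> = (\<Sum>j<n. coeff p j * x ^ j)"
  proof (cases "p = 0")
    case False
    then have "degree p < n"
      using assms[of "degree p"] leading_coeff_0_iff by (metis not_le)
    then show ?thesis
      by (intro sum.mono_neutral_left) (auto simp: coeff_eq_0)
  qed simp
  finally show ?thesis .
qed

lemma coeff_monic_linear_power_diff:
  fixes a b :: "'a::comm_ring_1"
  assumes "k \<le> j"
  shows "coeff ([:a, 1:] ^ k - [:b, 1:] ^ k) j = 0"
proof (cases "j = k")
  case True
  then show ?thesis by (simp add: coeff_linear_power)
next
  case False
  then have "degree ([:a, 1:] ^ k) < j" "degree ([:b, 1:] ^ k) < j"
    using assms degree_power_le[of "[:a, 1:]" k] degree_power_le[of "[:b, 1:]" k] by auto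
  then show ?thesis by (simp add: coeff_eq_0)
qed

lemma second_difference_binom2_power:
  fixes k :: nat
  defines "F \<equiv> \<lambda>x. (of_int (binom2 x) :: rat) ^ k"
  obtains P :: "rat poly" where "\<And>j. k \<le> j \<Longrightarrow> coeff P j = 0"
    and "\<And>c. (F (c + 1) - F c) - (F c - F (c - 1)) = poly P (of_int (binom2 c))"
proof -
  define A :: "rat poly" where "A = [:1/2, 1:]"
  define B :: "rat poly" where "B = [:1/4, 2:]"
  define E where "E = (\<Sum>e\<in>{1..k}. if even e
      then smult (2 * of_nat (k choose e)) (B ^ (e div 2) * A ^ (k - e)) else 0)"
  define P where "P = E + smult 2 (A ^ k - [:0, 1:] ^ k)"
  have "coeff E j = 0" if "k \<le> j" for j
    unfolding E_def coeff_sum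
  proof (intro sum.neutral ballI)
    fix e assume e: "e \<in> {1..k}"
    show "coeff (if even e
        then smult (2 * of_nat (k choose e)) (B ^ (e div 2) * A ^ (k - e)) else 0) j = 0"
    proof (cases "even e")
      case True
      have "degree (B ^ (e div 2) * A ^ (k - e)) \<le>
          degree (B ^ (e div 2)) + degree (A ^ (k - e))"
        by (rule degree_mult_le)
      also have "\<dots> \<le> e div 2 + (k - e)"
        using degree_power_le[of B "e div 2"] degree_power_le[of A "k - e"]
        by (simp add: A_def B_def)
      also have "\<dots> < j"
        using True e that by (auto elim!: evenE)
      finally show ?thesis by (simp add: coeff_eq_0)
    qed simp
  qed
  then have coeff_P: "coeff P j = 0" if "k \<le> j" for j
    using that coeff_monic_linear_power_diff[OF that, of "1/2" "0::rat"]
    by (simp add: P_def A_def)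
  have "(F (c + 1) - F c) - (F c - F (c - 1)) = poly P (of_int (binom2 c))" for c
  proof -
    define t :: rat where "t = of_int (binom2 c)"
    define a :: rat where "a = of_int c - 1/2"
    have t: "t = of_int c * (of_int c - 1) / 2"
      unfolding t_def by (rule of_int_binom2)
    have "of_int (binom2 (c + 1)) = poly A t + a" "of_int (binom2 (c - 1)) = poly A t - a"
      unfolding of_int_binom2 A_def a_def t by (simp_all add: field_simps)
    then have plus: "F (c + 1) = (poly A t + a) ^ k" and minus: "F (c - 1) = (poly A t - a) ^ k"
      by (simp_all add: F_def)
    have a2: "a\<^sup>2 = poly B t"
      unfolding B_def a_def t by (simp add: field_simps power2_eq_square)
    have "F (c + 1) + F (c - 1) =
        (\<Sum>e\<le>k. if even e
          then 2 * of_nat (k choose e) * poly B t ^ (e div 2) * poly A t ^ (k - e) else 0)"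
      unfolding plus minus power_add_plus_power_diff a2 ..
    also have "\<dots> = 2 * poly A t ^ k + poly E t"
      by (simp add: E_def poly_sum atMost_atLeast0 sum.atLeast_Suc_atMost mult.assoc
          if_distrib[of "\<lambda>p. poly p t"] cong: if_cong)
    finally show ?thesis
      by (simp add: P_def F_def t_def[symmetric] algebra_simps)
  qed
  with coeff_P show ?thesis using that by blast
qed


theorem theorem3p5:
  fixes k :: nat
  shows "\<exists>\<xi> :: nat \<Rightarrow> rat. \<forall>la i mu.
           strict_partition la \<and> i \<le> num_corners la \<and>
           (i = 0 \<longrightarrow> num_corners la = 0 \<or> ycont la 1 > 1) \<and>
           plus_partition la i mu \<longrightarrow>
           qk k mu - qk k la = (\<Sum>j<k. \<xi> j * of_int (binom2 (xcont la i)) ^ j)"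
proof -
  define F :: "int \<Rightarrow> rat" where "F = (\<lambda>x. of_int (binom2 x) ^ k)"
  obtain P :: "rat poly" where coeff_P: "\<And>j. k \<le> j \<Longrightarrow> coeff P j = 0"
    and P: "\<And>c. (F (c + 1) - F c) - (F c - F (c - 1)) = poly P (of_int (binom2 c))"
    using second_difference_binom2_power[of k] unfolding F_def by blast
  show ?thesis
  proof (intro exI[of _ "coeff P"] allI impI)
    fix la i mu
    assume "strict_partition la \<and> i \<le> num_corners la \<and>
      (i = 0 \<longrightarrow> num_corners la = 0 \<or> ycont la 1 > 1) \<and> plus_partition la i mu"
    then obtain b where la: "strict_partition la" and mu: "strict_partition mu"
      and b: "b \<notin> diagram la" "diagram mu = insert b (diagram la)"
      and content: "Defs.content b = xcont la i"
      by (auto simp: plus_partition_def)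
    have "qk k mu - qk k la = corner_sum F mu - corner_sum F la"
      by (simp add: qk_def corner_sum_def F_def)
    also have "\<dots> = (F (Defs.content b + 1) - F (Defs.content b))
                      - (F (Defs.content b) - F (Defs.content b - 1))"
      by (rule corner_sum_add_box[OF la mu b]) (simp add: F_def binom2_def)
    also have "\<dots> = poly P (of_int (binom2 (xcont la i)))"
      unfolding content by (rule P)
    also have "\<dots> = (\<Sum>j<k. coeff P j * of_int (binom2 (xcont la i)) ^ j)"
      using coeff_P by (rule poly_eq_sum_lessThan)
    finally show "qk k mu - qk k la = (\<Sum>j<k. coeff P j * of_int (binom2 (xcont la i)) ^ j)" .
  qed
qed

end
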